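(* Let $\varphi(x)=\sum_{i\ge0}\gamma_i x^i\in\mathbb{C}[[x]]$. Then $\varphi(x)$ is symplectic if and only if for every $n\ge0$, $$\gamma_{2n+1}=\sum_i {n \brack i}\gamma_{2i}.$$ In particular, for every choice of $\gamma_0,\gamma_2,\gamma_4,\dots\in\mathbb{C}$ there is a unique symplectic power series with these even coefficients, determined by this rule.
   Context: A formal power series $\varphi(x)=\sum_{i\ge0}\gamma_i x^i$ is called symplectic if for every $m\ge1$ one has $\sum_{k=0}^{m-1}(-1)^k\binom{m-1}{k}\gamma_{m+k}=0$. The Euler polynomials $E_n(x)$ are defined by $\frac{2e^{xt}}{e^t+1}=\sum_{n\ge0}E_n(x)\frac{t^n}{n!}$. For $n\ge0$ the integers ${n\brack i}$ are defined by $x\big(x^{2n}-E_{2n}(x)\big)=\sum_i {n\brack i}x^{2i}$ (the polynomial $x^{2n}-E_{2n}(x)$ contains only odd powers of $x$); in particular ${n\brack i}=0$ for $i\le0$ or $i>n$. *)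

theory Defs
  imports "HOL-Computational_Algebra.Computational_Algebra"
begin

definition symplectic :: "complex fps \<Rightarrow> bool" where
  "symplectic \<phi> \<longleftrightarrow>
     (\<forall>m::nat. m \<ge> 1 \<longrightarrow>
        (\<Sum>k=0..m-1. (-1)^k * of_nat ((m-1) choose k) * fps_nth \<phi> (m+k)) = 0)"

text \<open>Value of the Euler polynomial E_n at x, read off the generating function
  2 e^(x t) / (e^t + 1) = sum_n E_n(x) t^n / n!.\<close>
definition euler_val :: "nat \<Rightarrow> complex \<Rightarrow> complex" where
  "euler_val n x = fact n * fps_nth (2 * fps_exp x * inverse (fps_exp 1 + 1)) n"

text \<open>The Euler polynomial E_n as a polynomial (unique since complex is infinite).\<close>
definition euler_poly :: "nat \<Rightarrow> complex poly" where
  "euler_poly n = (THE p. \<forall>x. poly p x = euler_val n x)"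

definition euler_bracket :: "nat \<Rightarrow> nat \<Rightarrow> complex" where
  "euler_bracket n i = coeff ([:0, 1:] * (monom 1 (2*n) - euler_poly (2*n))) (2*i)"

end

theory Submission
  imports Defs
begin

text \<open>Pair a power series \<open>\<phi>\<close> with polynomials by \<open>\<langle>\<phi>, \<Sum> c\<^sub>i x\<^sup>i\<rangle> = \<Sum> c\<^sub>i \<gamma>\<^sub>i\<close>.
  Expanding \<open>x (x - x\<^sup>2)\<^sup>m\<^sup>-\<^sup>1\<close> binomially, \<open>\<phi>\<close> is symplectic iff it is orthogonal to
  \<open>x (x - x\<^sup>2)\<^sup>k\<close> for all \<open>k\<close>. The powers \<open>(x - x\<^sup>2)\<^sup>k\<close> have degree \<open>2k\<close> and span the
  polynomials invariant under \<open>x \<mapsto> 1 - x\<close>; so does the family of Euler polynomials \<open>E\<^sub>2\<^sub>k\<close>,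
  by the reflection formula \<open>E\<^sub>n(1 - x) = (-1)\<^sup>n E\<^sub>n(x)\<close> read off the generating function.
  Hence symplecticity is equivalent to orthogonality to all \<open>x E\<^sub>2\<^sub>n\<close>. Combining reflection with
  \<open>E\<^sub>n(x) + E\<^sub>n(x + 1) = 2x\<^sup>n\<close> shows that \<open>E\<^sub>2\<^sub>n(x) - x\<^sup>2\<^sup>n\<close> is odd, whence
  \<open>\<langle>\<phi>, x E\<^sub>2\<^sub>n\<rangle> = \<gamma>\<^sub>2\<^sub>n\<^sub>+\<^sub>1 - \<Sum>\<^sub>i [n,i] \<gamma>\<^sub>2\<^sub>i\<close>.\<close>

lemma coeff_pcompose_neg: "coeff (pcompose p [:0, -1 :: 'a :: comm_ring_1:]) j = (-1) ^ j * coeff p j"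
proof (induction p arbitrary: j)
  case (pCons a p)
  then show ?case
    by (cases j) (simp_all add: pcompose_pCons)
qed simp

lemma even_degree_if_pcompose_reflect_eq:
  fixes q :: "'a :: field_char_0 poly"
  assumes "pcompose q [:1, -1:] = q"
  shows "even (degree q)"
proof (cases "q = 0")
  case False
  have "lead_coeff q * (-1) ^ degree q = lead_coeff q"
    using lead_coeff_comp[of "[:1, -1:]" q] assms by simp
  with False have "(-1 :: 'a) ^ degree q = 1"
    by simp
  then show ?thesis
    by (metis neg_one_odd_power one_neq_neg_one)
qed simp

definition fps_pairing :: "'a :: comm_semiring_1 fps \<Rightarrow> 'a poly \<Rightarrow> 'a" where
  "fps_pairing \<phi> p = (\<Sum>i\<le>degree p. coeff p i * \<phi> $ i)"

lemma fps_pairing_conv_sum: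
  assumes "degree p \<le> N"
  shows "fps_pairing \<phi> p = (\<Sum>i\<le>N. coeff p i * \<phi> $ i)"
  unfolding fps_pairing_def
  by (rule sum.mono_neutral_left) (use assms in \<open>auto simp: coeff_eq_0\<close>)

lemma fps_pairing_0 [simp]: "fps_pairing \<phi> 0 = 0"
  by (simp add: fps_pairing_def)

lemma fps_pairing_add: "fps_pairing \<phi> (p + q) = fps_pairing \<phi> p + fps_pairing \<phi> q"
proof -
  have "degree (p + q) \<le> max (degree p) (degree q)"
    by (rule degree_add_le) auto
  then show ?thesis
    by (simp add: fps_pairing_conv_sum[of _ "max (degree p) (degree q)"] sum.distrib algebra_simps)
qed

lemma fps_pairing_smult: "fps_pairing \<phi> (smult c p) = c * fps_pairing \<phi> p"
proof -
  have "fps_pairing \<phi> (smult c p) = (\<Sum>i\<le>degree p. coeff (smult c p) i * \<phi> $ i)"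
    by (rule fps_pairing_conv_sum) (rule degree_smult_le)
  then show ?thesis
    by (simp add: fps_pairing_def sum_distrib_left mult.assoc)
qed

lemma fps_pairing_diff:
  "fps_pairing (\<phi> :: 'a :: comm_ring_1 fps) (p - q) = fps_pairing \<phi> p - fps_pairing \<phi> q"
  using fps_pairing_add[of \<phi> "p - q" q] by simp

lemma fps_pairing_sum: "fps_pairing \<phi> (\<Sum>t\<in>A. p t) = (\<Sum>t\<in>A. fps_pairing \<phi> (p t))"
  by (induction A rule: infinite_finite_induct) (simp_all add: fps_pairing_add)

lemma fps_pairing_monom [simp]: "fps_pairing \<phi> (monom c n) = c * \<phi> $ n"
  by (simp add: fps_pairing_conv_sum[of "monom c n" n] degree_monom_le mult_delta_left)

lemma fps_pairing_vanishes_on_reflect_invariant: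
  fixes b :: "nat \<Rightarrow> 'a :: field_char_0 poly"
  assumes b_invariant: "\<And>k. pcompose (b k) [:1, -1:] = b k"
    and degree_b: "\<And>k. degree (b k) = 2 * k"
    and b_nonzero: "\<And>k. b k \<noteq> 0"
    and b_vanishes: "\<And>k. fps_pairing \<phi> ([:0, 1:] * b k) = 0"
    and q_invariant: "pcompose q [:1, -1:] = q"
  shows "fps_pairing \<phi> ([:0, 1:] * q) = 0"
  using q_invariant
proof (induction "degree q" arbitrary: q rule: less_induct)
  case less
  show ?case
  proof (cases "q = 0")
    case False
    obtain k where k: "degree q = 2 * k"
      using even_degree_if_pcompose_reflect_eq[OF less.prems] by blast
    define c where "c = lead_coeff q / lead_coeff (b k)"
    define r where "r = q - smult c (b k)"
    have r_invariant: "pcompose r [:1, -1:] = r"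
      by (simp add: r_def pcompose_diff pcompose_smult b_invariant less.prems)
    have "degree r \<le> 2 * k"
      using degree_diff_le[of q "2 * k" "smult c (b k)"] degree_smult_le[of c "b k"] degree_b[of k] k
      by (simp add: r_def)
    moreover have "coeff r (2 * k) = 0"
    proof -
      have "lead_coeff (b k) \<noteq> 0"
        using b_nonzero[of k] by simp
      then show ?thesis
        using degree_b[of k] k by (simp add: r_def c_def)
    qed
    ultimately have "r = 0 \<or> degree r < degree q"
      using k by (metis le_neq_implies_less leading_coeff_0_iff)
    then have r_vanishes: "fps_pairing \<phi> ([:0, 1:] * r) = 0"
      using less.hyps r_invariant by auto
    have "[:0, 1:] * q = [:0, 1:] * r + smult c ([:0, 1:] * b k)"
      by (simp add: r_def algebra_simps)
    then show ?thesis
      by (simp only: fps_pairing_add fps_pairing_smult b_vanishes r_vanishes mult_zero_right add_0)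
  qed simp
qed

lemma x_mult_power_x_minus_x2:
  "[:0, 1:] * [:0, 1, -1:] ^ j = (\<Sum>t\<le>j. monom ((-1) ^ t * of_nat (j choose t)) (j + 1 + t) :: complex poly)"
proof (rule poly_ext)
  fix x :: complex
  have "poly [:0, 1, -1:] x = x * (-x + 1)"
    by (simp add: algebra_simps)
  then have "poly ([:0, 1:] * [:0, 1, -1:] ^ j) x = x ^ (j + 1) * (-x + 1) ^ j"
    by (simp only: poly_mult poly_power power_mult_distrib) simp
  also have "\<dots> = x ^ (j + 1) * (\<Sum>t\<le>j. of_nat (j choose t) * (-x) ^ t * 1 ^ (j - t))"
    by (simp only: binomial_ring)
  also have "\<dots> = (\<Sum>t\<le>j. (-1) ^ t * of_nat (j choose t) * x ^ (j + 1 + t))"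
    unfolding sum_distrib_left by (rule sum.cong) (simp_all add: power_minus[of x] power_add mult_ac)
  finally show "poly ([:0, 1:] * [:0, 1, -1:] ^ j) x
      = poly (\<Sum>t\<le>j. monom ((-1) ^ t * of_nat (j choose t)) (j + 1 + t)) x"
    by (simp add: poly_sum poly_monom)
qed

lemma symplectic_iff_fps_pairing:
  "symplectic \<phi> \<longleftrightarrow> (\<forall>j. fps_pairing \<phi> ([:0, 1:] * [:0, 1, -1:] ^ j) = 0)"
proof -
  have pairing: "fps_pairing \<phi> ([:0, 1:] * [:0, 1, -1:] ^ j)
      = (\<Sum>k=0..Suc j - 1. (-1) ^ k * of_nat ((Suc j - 1) choose k) * \<phi> $ (Suc j + k))" for j
    unfolding x_mult_power_x_minus_x2 fps_pairing_sum by (simp add: atLeast0AtMost)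
  show ?thesis
    unfolding symplectic_def pairing
  proof safe
    fix m :: nat
    assume "\<forall>j. (\<Sum>k=0..Suc j - 1. (-1) ^ k * of_nat ((Suc j - 1) choose k) * \<phi> $ (Suc j + k)) = 0"
      and "1 \<le> m"
    then show "(\<Sum>k=0..m - 1. (-1) ^ k * of_nat ((m - 1) choose k) * \<phi> $ (m + k)) = 0"
      by (cases m) auto
  qed (drule spec[of _ "Suc _"], simp)
qed

definition euler_gf :: "complex \<Rightarrow> complex fps" where
  "euler_gf x = 2 * fps_exp x * inverse (fps_exp 1 + 1)"

lemma euler_val_eq_euler_gf: "euler_val n x = fact n * euler_gf x $ n"
  by (simp add: euler_val_def euler_gf_def)

lemma fps_exp_one_plus_one_inverse: "(fps_exp 1 + 1) * inverse (fps_exp 1 + 1 :: complex fps) = 1"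
  by (rule inverse_mult_eq_1') simp

lemma euler_gf_shift: "euler_gf x + euler_gf (x + 1) = 2 * fps_exp x"
proof -
  have "euler_gf x + euler_gf (x + 1)
      = 2 * fps_exp x * ((fps_exp 1 + 1) * inverse (fps_exp 1 + 1))"
    by (simp add: euler_gf_def fps_exp_add_mult algebra_simps)
  then show ?thesis by (simp add: fps_exp_one_plus_one_inverse)
qed

lemma euler_gf_reflect: "euler_gf x oo - fps_X = euler_gf (1 - x)"
proof -
  let ?I = "inverse (fps_exp 1 + 1 :: complex fps)"
  have compose: "(f * g) oo - fps_X = (f oo - fps_X) * (g oo - fps_X)" for f g :: "complex fps"
    by (rule fps_compose_mult_distrib) simp
  have inverse_composed: "(fps_exp (-1) + 1) * (?I oo - fps_X) = 1"
    using arg_cong[OF fps_exp_one_plus_one_inverse, of "\<lambda>f. f oo - fps_X"]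
    by (simp add: compose fps_compose_add_distrib)
  have composed: "euler_gf x oo - fps_X = 2 * fps_exp (-x) * (?I oo - fps_X)"
    by (simp add: euler_gf_def compose)
  have factored: "fps_exp 1 + 1 = fps_exp 1 * (fps_exp (-1) + 1 :: complex fps)"
    by (simp add: distrib_left fps_exp_add_mult[symmetric])
  have "(euler_gf x oo - fps_X) * (fps_exp 1 + 1)
      = 2 * fps_exp (-x) * fps_exp 1 * ((fps_exp (-1) + 1) * (?I oo - fps_X))"
    unfolding composed factored by (simp only: mult_ac)
  also have "\<dots> = 2 * fps_exp (1 - x)"
    using fps_exp_add_mult[of 1 "-x"] by (simp only: inverse_composed) (simp add: mult_ac)
  finally have "(euler_gf x oo - fps_X) * ((fps_exp 1 + 1) * ?I) = 2 * fps_exp (1 - x) * ?I"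
    by (simp add: mult.assoc[symmetric])
  then show ?thesis by (simp add: fps_exp_one_plus_one_inverse euler_gf_def)
qed

lemma euler_val_shift: "euler_val n x + euler_val n (x + 1) = 2 * x ^ n"
proof -
  have "euler_gf x $ n + euler_gf (x + 1) $ n = 2 * x ^ n / fact n"
    using arg_cong[OF euler_gf_shift, of "\<lambda>f. f $ n"] by (simp add: numeral_fps_const)
  then show ?thesis
    by (simp add: euler_val_eq_euler_gf distrib_left[symmetric])
qed

lemma euler_val_reflect: "euler_val n (1 - x) = (-1) ^ n * euler_val n x"
  using arg_cong[OF euler_gf_reflect, of "\<lambda>f. f $ n"]
  by (simp add: euler_val_eq_euler_gf fps_compose_uminus')

lemma euler_val_polynomial: "\<exists>p. \<forall>x. poly p x = euler_val n x"
proof (intro exI allI)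
  fix x :: complex
  let ?I = "inverse (fps_exp 1 + 1 :: complex fps)"
  have "(2 * fps_exp x) $ k = 2 * x ^ k / fact k" for k
    by (simp add: numeral_fps_const)
  then have "euler_val n x = fact n * (\<Sum>k\<le>n. 2 * x ^ k / fact k * ?I $ (n - k))"
    by (simp add: euler_val_eq_euler_gf euler_gf_def fps_mult_nth atLeast0AtMost del: fps_exp_nth)
  then show "poly (\<Sum>k\<le>n. monom (2 * fact n * ?I $ (n - k) / fact k) k) x = euler_val n x"
    by (simp add: poly_sum poly_monom sum_distrib_left algebra_simps)
qed

lemma poly_euler_poly: "poly (euler_poly n) x = euler_val n x"
proof -
  have "\<exists>!p. \<forall>x. poly p x = euler_val n x"
    using euler_val_polynomial by (auto intro: poly_ext)
  from theI'[OF this] show ?thesis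
    unfolding euler_poly_def by blast
qed

lemma euler_poly_shift: "euler_poly n + pcompose (euler_poly n) [:1, 1:] = monom 2 n"
  by (rule poly_ext)
     (simp add: poly_pcompose poly_euler_poly poly_monom euler_val_shift[of n, symmetric] add.commute)

lemma euler_poly_reflect: "pcompose (euler_poly n) [:1, -1:] = smult ((-1) ^ n) (euler_poly n)"
  by (rule poly_ext) (simp add: poly_pcompose poly_euler_poly euler_val_reflect[symmetric])

lemma degree_euler_poly: "degree (euler_poly n) = n"
  and lead_coeff_euler_poly: "lead_coeff (euler_poly n) = 1"
proof -
  let ?p = "euler_poly n"
  have "degree (pcompose ?p [:1, 1:]) = degree ?p"
    by (simp add: degree_pcompose)
  moreover have "lead_coeff (pcompose ?p [:1, 1:]) = lead_coeff ?p"
    by (simp add: lead_coeff_comp)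
  ultimately have "coeff (?p + pcompose ?p [:1, 1:]) (degree ?p) = 2 * lead_coeff ?p"
    by simp
  then have "coeff (monom 2 n) (degree ?p) = 2 * lead_coeff ?p"
    by (simp only: euler_poly_shift)
  moreover have "?p \<noteq> 0"
    using euler_poly_shift[of n] by auto
  ultimately show "degree ?p = n" and "lead_coeff ?p = 1"
    by (auto simp: coeff_monom split: if_splits)
qed

lemma euler_poly_add_pcompose_neg:
  assumes "even n"
  shows "euler_poly n + pcompose (euler_poly n) [:0, -1:] = monom 2 n"
proof (rule poly_ext)
  fix x
  have "euler_val n (-x) = euler_val n (x + 1)"
    using euler_val_reflect[of n "-x"] \<open>even n\<close> by (simp add: add.commute)
  then show "poly (euler_poly n + pcompose (euler_poly n) [:0, -1:]) x = poly (monom 2 n) x"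
    by (simp add: poly_pcompose poly_euler_poly poly_monom euler_val_shift)
qed

lemma coeff_euler_poly_even:
  assumes "even n" "even j"
  shows "coeff (euler_poly n) j = (if j = n then 1 else 0)"
proof -
  have "2 * coeff (euler_poly n) j = coeff (monom 2 n) j"
    using arg_cong[OF euler_poly_add_pcompose_neg[OF \<open>even n\<close>], of "\<lambda>p. coeff p j"] \<open>even j\<close>
    by (simp add: coeff_pcompose_neg)
  then show ?thesis
    by (auto simp: coeff_monom)
qed

lemma fps_pairing_x_mult_euler_poly:
  "fps_pairing \<phi> ([:0, 1:] * euler_poly (2 * n))
     = \<phi> $ (2 * n + 1) - (\<Sum>i\<le>n. euler_bracket n i * \<phi> $ (2 * i))"
proof -
  define r where "r = [:0, 1:] * (monom 1 (2 * n) - euler_poly (2 * n))"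
  have "degree (monom 1 (2 * n) - euler_poly (2 * n)) \<le> 2 * n"
    by (rule degree_diff_le) (simp_all add: degree_monom_le degree_euler_poly)
  then have "degree r \<le> Suc (2 * n)"
    unfolding r_def using degree_mult_le[of "[:0, 1:]" "monom 1 (2 * n) - euler_poly (2 * n)"]
    by simp
  have odd_coeffs: "coeff r (Suc (2 * i)) = 0" for i
    by (simp add: r_def coeff_euler_poly_even coeff_monom)
  have "fps_pairing \<phi> r = (\<Sum>j\<le>Suc (2 * n). coeff r j * \<phi> $ j)"
    by (rule fps_pairing_conv_sum) fact
  also have "\<dots> = (\<Sum>i\<le>n. euler_bracket n i * \<phi> $ (2 * i))"
    unfolding sum.in_pairs_0 odd_coeffs by (simp add: euler_bracket_def r_def)
  finally have "fps_pairing \<phi> r = (\<Sum>i\<le>n. euler_bracket n i * \<phi> $ (2 * i))" .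
  moreover have "[:0, 1:] * euler_poly (2 * n) = monom 1 (2 * n + 1) - r"
    by (simp add: r_def algebra_simps monom_Suc)
  ultimately show ?thesis
    by (simp add: fps_pairing_diff)
qed

lemma symplectic_iff_euler_bracket:
  "symplectic \<phi> \<longleftrightarrow> (\<forall>n. \<phi> $ (2 * n + 1) = (\<Sum>i\<le>n. euler_bracket n i * \<phi> $ (2 * i)))"
proof -
  let ?w = "\<lambda>k. [:0, 1, -1:] ^ k :: complex poly"
  let ?e = "\<lambda>k. euler_poly (2 * k)"
  have w_invariant: "pcompose (?w k) [:1, -1:] = ?w k" for k
    by (rule poly_ext) (simp add: poly_pcompose algebra_simps)
  have e_invariant: "pcompose (?e k) [:1, -1:] = ?e k" for k
    by (simp add: euler_poly_reflect)
  have degree_w: "degree (?w k) = 2 * k" and w_nonzero: "?w k \<noteq> 0" for k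
    by (simp_all add: degree_power_eq)
  have degree_e: "degree (?e k) = 2 * k" and e_nonzero: "?e k \<noteq> 0" for k
    using lead_coeff_euler_poly[of "2 * k"] by (auto simp: degree_euler_poly)
  have "symplectic \<phi> \<longleftrightarrow> (\<forall>k. fps_pairing \<phi> ([:0, 1:] * ?w k) = 0)"
    by (rule symplectic_iff_fps_pairing)
  also have "\<dots> \<longleftrightarrow> (\<forall>k. fps_pairing \<phi> ([:0, 1:] * ?e k) = 0)"
    using fps_pairing_vanishes_on_reflect_invariant[of ?w, OF w_invariant degree_w w_nonzero]
      fps_pairing_vanishes_on_reflect_invariant[of ?e, OF e_invariant degree_e e_nonzero]
      w_invariant e_invariant
    by blast
  also have "\<dots> \<longleftrightarrow> (\<forall>n. \<phi> $ (2 * n + 1) = (\<Sum>i\<le>n. euler_bracket n i * \<phi> $ (2 * i)))"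
    unfolding fps_pairing_x_mult_euler_poly by simp
  finally show ?thesis .
qed

lemma ex1_symplectic_with_even_coeffs: "\<exists>!\<phi>. symplectic \<phi> \<and> (\<forall>n. \<phi> $ (2 * n) = g n)"
proof -
  define \<phi> where "\<phi> = Abs_fps (\<lambda>m. if even m then g (m div 2)
      else (\<Sum>i\<le>m div 2. euler_bracket (m div 2) i * g i))"
  show ?thesis
  proof (rule ex1I[of _ \<phi>])
    show "symplectic \<phi> \<and> (\<forall>n. \<phi> $ (2 * n) = g n)"
      by (simp add: \<phi>_def symplectic_iff_euler_bracket)
  next
    fix \<psi>
    assume \<psi>: "symplectic \<psi> \<and> (\<forall>n. \<psi> $ (2 * n) = g n)"
    show "\<psi> = \<phi>"
    proof (rule fps_ext)
      show "\<psi> $ m = \<phi> $ m" for m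
        using \<psi> by (cases "even m") (auto elim!: oddE simp: \<phi>_def symplectic_iff_euler_bracket)
    qed
  qed
qed

theorem theorem5p1:
  shows "(\<forall>\<phi>::complex fps. symplectic \<phi> \<longleftrightarrow>
            (\<forall>n. fps_nth \<phi> (2*n+1) = (\<Sum>i\<le>n. euler_bracket n i * fps_nth \<phi> (2*i))))
       \<and> (\<forall>g::nat \<Rightarrow> complex. \<exists>!\<phi>::complex fps. symplectic \<phi> \<and> (\<forall>n. fps_nth \<phi> (2*n) = g n))"
  using symplectic_iff_euler_bracket ex1_symplectic_with_even_coeffs by blast

end
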